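(* Let $X$ be a finite set of alternatives and let $t$ be a full support transition function. For each $A \in \mathcal{X}_2$ let $\nu_A$ be the unique stationary distribution of the Markov chain $M_A$. The following are equivalent: (1) $t$ is menu invariant, i.e. $\nu_A=\nu_B$ for all $A,B\in\mathcal{X}_2$; (2) $t$ is locally invariant with respect to $\nu_A$ for every $A\in\mathcal{X}_2$; (3) there exists some $A\in\mathcal{X}_2$ such that $t$ is locally invariant with respect to $\nu_A$. Here $t$ is locally invariant with respect to a distribution $\nu\in\Delta(\mathcal{L}(X))$ if for every $A\subseteq X$ with $|A|\ge 3$ and every $x\in A$, $$\sum_{\succ\in N(x,A)}\nu(\succ)\,t(x,\succ)=\sum_{y\in A\setminus\{x\}}\ \sum_{\succ\in N(x,A)\cap N(y,A\setminus\{x\})}\nu(\succ)\,t(y,\succ)$$ as elements (vectors) of $\mathbb{R}^{\mathcal{L}(X)}$.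
   Context: $X$ is a finite set; $\mathcal{X}$ is the collection of nonempty subsets of $X$, and $\mathcal{X}_2$ the collection of subsets of $X$ with at least two elements. $\mathcal{L}(X)$ is the set of linear orders on $X$, $\Delta(\mathcal{L}(X))$ the set of probability distributions on it, and $\mathrm{int}\,\Delta(\mathcal{L}(X))$ the full support distributions. For $\succ\in\mathcal{L}(X)$ and $A\in\mathcal{X}$, $M(\succ,A)$ is the $\succ$-maximal element of $A$, and $N(x,A)=\{\succ : x\succ y \text{ for all } y\in A\setminus\{x\}\}$. A transition function is a map $t:X\times\mathcal{L}(X)\to\Delta(\mathcal{L}(X))$; it is full support if it takes values in $\mathrm{int}\,\Delta(\mathcal{L}(X))$. Write $t_{\succ'}(x,\succ)$ for the probability that $t(x,\succ)$ assigns to $\succ'$. For each $A\in\mathcal{X}$, $M_A$ is the Markov transition matrix on $\mathcal{L}(X)$ with entries $m_A(\succ,\succ')=t_{\succ'}(M(\succ,A),\succ)$; when $t$ is full support, $M_A$ is ergodic with unique stationary distribution $\nu_A$. *)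

theory Defs
  imports Complex_Main
begin

text \<open>The finite set X of alternatives is the universe of a finite type 'a.
  A linear order on X is a relation r with linear_order r (reflexive, antisymmetric,
  transitive, total on UNIV); (x,y) in r means x is ranked weakly above y, so
  x is strictly preferred to y iff (x,y) in r and x ~= y.\<close>

definition LX :: "('a \<times> 'a) set set" where
  "LX = {r. linear_order r}"

definition Mx :: "('a \<times> 'a) set \<Rightarrow> 'a set \<Rightarrow> 'a" where
  "Mx r A = (THE x. x \<in> A \<and> (\<forall>y\<in>A. (x, y) \<in> r))"

definition Nx :: "'a \<Rightarrow> 'a set \<Rightarrow> ('a \<times> 'a) set set" where
  "Nx x A = {r \<in> LX. \<forall>y \<in> A - {x}. (x, y) \<in> r \<and> x \<noteq> y}"

definition X2 :: "'a set set" where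
  "X2 = {A. 2 \<le> card A}"

text \<open>Probability distributions on L(X), as functions restricted to LX.\<close>
definition is_dist :: "(('a \<times> 'a) set \<Rightarrow> real) \<Rightarrow> bool" where
  "is_dist \<nu> \<longleftrightarrow> (\<forall>r\<in>LX. 0 \<le> \<nu> r) \<and> (\<Sum>r\<in>LX. \<nu> r) = 1"

text \<open>Transition function t : X x L(X) -> Delta(L(X)); t x r r' is the probability
  t_{r'}(x,r). Full support: all values strictly positive.\<close>
definition full_support_transition ::
  "('a \<Rightarrow> ('a \<times> 'a) set \<Rightarrow> ('a \<times> 'a) set \<Rightarrow> real) \<Rightarrow> bool" where
  "full_support_transition t \<longleftrightarrow>
     (\<forall>x r. r \<in> LX \<longrightarrow> (\<forall>r'\<in>LX. 0 < t x r r') \<and> (\<Sum>r'\<in>LX. t x r r') = 1)"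

text \<open>nu is a stationary distribution of the Markov matrix M_A with entries
  m_A(r,r') = t_{r'}(M(r,A), r).\<close>
definition stationary ::
  "('a \<Rightarrow> ('a \<times> 'a) set \<Rightarrow> ('a \<times> 'a) set \<Rightarrow> real) \<Rightarrow> 'a set
     \<Rightarrow> (('a \<times> 'a) set \<Rightarrow> real) \<Rightarrow> bool" where
  "stationary t A \<nu> \<longleftrightarrow> is_dist \<nu> \<and>
     (\<forall>r'\<in>LX. \<nu> r' = (\<Sum>r\<in>LX. \<nu> r * t (Mx r A) r r'))"

definition menu_invariant ::
  "('a set \<Rightarrow> ('a \<times> 'a) set \<Rightarrow> real) \<Rightarrow> bool" where
  "menu_invariant \<nu> \<longleftrightarrow> (\<forall>A\<in>X2. \<forall>B\<in>X2. \<forall>r\<in>LX. \<nu> A r = \<nu> B r)"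

definition locally_invariant ::
  "('a \<Rightarrow> ('a \<times> 'a) set \<Rightarrow> ('a \<times> 'a) set \<Rightarrow> real)
     \<Rightarrow> (('a \<times> 'a) set \<Rightarrow> real) \<Rightarrow> bool" where
  "locally_invariant t \<nu> \<longleftrightarrow>
     (\<forall>A. 3 \<le> card A \<longrightarrow> (\<forall>x\<in>A. \<forall>r'\<in>LX.
        (\<Sum>r\<in>Nx x A. \<nu> r * t x r r') =
        (\<Sum>y\<in>A - {x}. \<Sum>r\<in>Nx x A \<inter> Nx y (A - {x}). \<nu> r * t y r r')))"

end

theory Submission
  imports Defs
begin

text \<open>Write \<open>\<nu>M\<^sub>A\<close> for one step of the chain \<open>M\<^sub>A\<close> started in \<open>\<nu>\<close>.
  An order whose \<open>A\<close>-maximum is not \<open>x\<close> has the same maximum in \<open>A - {x}\<close>, so the two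
  sides of local invariance at \<open>(A, x)\<close> differ exactly by \<open>\<nu>M\<^sub>A - \<nu>M\<^bsub>A - {x}\<^esub>\<close>.
  Hence local invariance of \<open>\<nu>\<close> says that \<open>\<nu>M\<^sub>A\<close> does not depend on the menu \<open>A\<close>
  (any two menus are connected through their union by deleting one element at a time).
  If \<open>\<nu>\<^sub>B\<close> is locally invariant then \<open>\<nu>\<^sub>BM\<^sub>A = \<nu>\<^sub>BM\<^sub>B = \<nu>\<^sub>B\<close>, so \<open>\<nu>\<^sub>B\<close> is stationary
  for every \<open>M\<^sub>A\<close>, and uniqueness of the stationary distribution of a positive stochastic
  matrix gives \<open>\<nu>\<^sub>A = \<nu>\<^sub>B\<close>. Conversely, menu invariance gives
  \<open>\<nu>\<^sub>BM\<^sub>A = \<nu>\<^sub>AM\<^sub>A = \<nu>\<^sub>A = \<nu>\<^sub>B\<close> for every menu \<open>A\<close>.\<close>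

lemma stochastic_invariant_zero_sum_nonpos:
  fixes P :: "'b \<Rightarrow> 'b \<Rightarrow> real"
  assumes "finite S"
    and P_pos: "\<And>r r'. r \<in> S \<Longrightarrow> r' \<in> S \<Longrightarrow> 0 < P r r'"
    and P_sum: "\<And>r. r \<in> S \<Longrightarrow> (\<Sum>r'\<in>S. P r r') = 1"
    and d_inv: "\<And>r'. r' \<in> S \<Longrightarrow> d r' = (\<Sum>r\<in>S. d r * P r r')"
    and d_sum: "(\<Sum>r\<in>S. d r) = 0"
    and "r0 \<in> S"
  shows "d r0 \<le> 0"
proof (rule ccontr)
  assume "\<not> d r0 \<le> 0"
  define S_pos where "S_pos = {r \<in> S. 0 < d r}"
  have r0: "r0 \<in> S_pos" using \<open>\<not> d r0 \<le> 0\<close> \<open>r0 \<in> S\<close> by (simp add: S_pos_def)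
  obtain r1 where r1: "r1 \<in> S" "d r1 < 0"
  proof (rule ccontr)
    assume "\<not> thesis"
    with that have "\<forall>r\<in>S. 0 \<le> d r" by force
    then have "\<forall>r\<in>S. d r = 0" using d_sum sum_nonneg_eq_0_iff[OF \<open>finite S\<close>] by blast
    then show False using r0 by (force simp: S_pos_def)
  qed
  define Q where "Q r = (\<Sum>r'\<in>S_pos. P r r')" for r
  have Q_le_1: "Q r \<le> 1" if "r \<in> S" for r
  proof -
    have "Q r \<le> (\<Sum>r'\<in>S. P r r')"
      unfolding Q_def using \<open>finite S\<close> P_pos that
      by (intro sum_mono2) (auto simp: S_pos_def less_imp_le)
    with P_sum that show ?thesis by simp
  qed
  have Q_pos: "0 < Q r" if "r \<in> S" for r
    unfolding Q_def using \<open>finite S\<close> r0 P_pos that by (intro sum_pos) (auto simp: S_pos_def)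
  text \<open>Every state sends a fraction \<open>Q r \<in> (0, 1]\<close> of its mass into \<open>S_pos\<close>, so the
    states with \<open>d r < 0\<close> make \<open>S_pos\<close> lose mass in one step.\<close>
  have "(\<Sum>r'\<in>S_pos. d r') = (\<Sum>r'\<in>S_pos. \<Sum>r\<in>S. d r * P r r')"
    using d_inv by (intro sum.cong) (auto simp: S_pos_def)
  also have "\<dots> = (\<Sum>r\<in>S. d r * Q r)"
    unfolding Q_def by (simp add: sum.swap[of _ S_pos] sum_distrib_left)
  also have "\<dots> < (\<Sum>r\<in>S. max (d r) 0)"
  proof (rule sum_strict_mono_ex1[OF \<open>finite S\<close>])
    show "\<forall>r\<in>S. d r * Q r \<le> max (d r) 0"
    proof
      fix r assume "r \<in> S"
      then show "d r * Q r \<le> max (d r) 0"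
        using Q_le_1[of r] Q_pos[of r] mult_left_le[of "Q r" "d r"]
          mult_nonpos_nonneg[of "d r" "Q r"]
        by (cases "0 \<le> d r") auto
    qed
    show "\<exists>r\<in>S. d r * Q r < max (d r) 0"
      using r1 mult_neg_pos[OF r1(2) Q_pos[OF r1(1)]] by (auto simp: max_def)
  qed
  also have "\<dots> = (\<Sum>r\<in>S. if 0 < d r then d r else 0)"
    by (intro sum.cong) auto
  also have "\<dots> = (\<Sum>r'\<in>S_pos. d r')"
    using \<open>finite S\<close> by (simp add: S_pos_def sum.inter_filter)
  finally show False by simp
qed

lemma stochastic_stationary_unique:
  fixes P :: "'b \<Rightarrow> 'b \<Rightarrow> real"
  assumes "finite S"
    and "\<And>r r'. r \<in> S \<Longrightarrow> r' \<in> S \<Longrightarrow> 0 < P r r'"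
    and "\<And>r. r \<in> S \<Longrightarrow> (\<Sum>r'\<in>S. P r r') = 1"
    and "\<And>r'. r' \<in> S \<Longrightarrow> \<mu> r' = (\<Sum>r\<in>S. \<mu> r * P r r')"
    and "\<And>r'. r' \<in> S \<Longrightarrow> \<nu> r' = (\<Sum>r\<in>S. \<nu> r * P r r')"
    and "(\<Sum>r\<in>S. \<mu> r) = (\<Sum>r\<in>S. \<nu> r)"
    and "r0 \<in> S"
  shows "\<mu> r0 = \<nu> r0"
proof -
  have "\<mu> r0 - \<nu> r0 \<le> 0"
    using assms(4,5) assms(6)[symmetric]
    by (intro stochastic_invariant_zero_sum_nonpos[OF assms(1-3) _ _ assms(7)])
      (simp_all add: left_diff_distrib sum_subtractf)
  moreover have "\<nu> r0 - \<mu> r0 \<le> 0"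
    using assms(4,5) assms(6)
    by (intro stochastic_invariant_zero_sum_nonpos[OF assms(1-3) _ _ assms(7)])
      (simp_all add: left_diff_distrib sum_subtractf)
  ultimately show ?thesis by simp
qed

lemma LX_D:
  assumes "r \<in> LX"
  shows "(x, x) \<in> r" and "(x, y) \<in> r \<Longrightarrow> (y, z) \<in> r \<Longrightarrow> (x, z) \<in> r"
    and "(x, y) \<in> r \<Longrightarrow> (y, x) \<in> r \<Longrightarrow> x = y"
    and "x \<noteq> y \<Longrightarrow> (x, y) \<in> r \<or> (y, x) \<in> r"
  using assms unfolding LX_def linear_order_on_def partial_order_on_def preorder_on_def
    refl_on_def trans_def antisym_def total_on_def by blast+

lemma LX_has_maximum:
  assumes "r \<in> LX" "finite A" "A \<noteq> {}"
  shows "\<exists>x\<in>A. \<forall>y\<in>A. (x, y) \<in> r"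
  using assms(2,3)
proof (induction A rule: finite_ne_induct)
  case (singleton x)
  then show ?case using LX_D(1)[OF assms(1)] by auto
next
  case (insert a F)
  then obtain m where m: "m \<in> F" "\<forall>y\<in>F. (m, y) \<in> r" by blast
  show ?case
  proof (cases "(a, m) \<in> r")
    case True
    then show ?thesis using m LX_D[OF assms(1)] by blast
  next
    case False
    then have "(m, a) \<in> r" using LX_D(1)[OF assms(1), of a] LX_D(4)[OF assms(1), of a m] by auto
    then show ?thesis using m by blast
  qed
qed

lemma Mx_eqI:
  assumes "r \<in> LX" "x \<in> A" "\<forall>y\<in>A. (x, y) \<in> r"
  shows "Mx r A = x"
  unfolding Mx_def by (rule the_equality) (use assms LX_D(3)[OF assms(1)] in blast)+

lemma Mx_in:
  assumes "r \<in> LX" "finite A" "A \<noteq> {}"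
  shows "Mx r A \<in> A" and "\<forall>y\<in>A. (Mx r A, y) \<in> r"
  using LX_has_maximum[OF assms] Mx_eqI[OF assms(1)] by metis+

lemma Nx_eq_Mx:
  assumes "finite A" "x \<in> A"
  shows "Nx x A = {r \<in> LX. Mx r A = x}"
proof -
  have "Mx r A = x \<longleftrightarrow> (\<forall>y\<in>A - {x}. (x, y) \<in> r \<and> x \<noteq> y)" if "r \<in> LX" for r
    using Mx_in[OF that assms(1)] Mx_eqI[OF that assms(2)] LX_D(1)[OF that] assms(2) by blast
  then show ?thesis unfolding Nx_def by blast
qed

lemma Mx_Diff_singleton:
  assumes "r \<in> LX" "finite A" "Mx r A \<noteq> x"
  shows "Mx r (A - {x}) = Mx r A"
proof (cases "A = {}")
  case False
  then show ?thesis using Mx_in[OF assms(1,2)] assms(3) by (intro Mx_eqI[OF assms(1)]) auto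
qed simp

definition markov_step ::
  "('a \<Rightarrow> ('a \<times> 'a) set \<Rightarrow> ('a \<times> 'a) set \<Rightarrow> real) \<Rightarrow> 'a set
     \<Rightarrow> (('a \<times> 'a) set \<Rightarrow> real) \<Rightarrow> ('a \<times> 'a) set \<Rightarrow> real" where
  "markov_step t A \<nu> r' = (\<Sum>r\<in>LX. \<nu> r * t (Mx r A) r r')"

lemma stationary_iff_markov_step:
  "stationary t A \<nu> \<longleftrightarrow> is_dist \<nu> \<and> (\<forall>r'\<in>LX. markov_step t A \<nu> r' = \<nu> r')"
  unfolding stationary_def markov_step_def by auto

lemma markov_step_cong:
  assumes "\<forall>r\<in>LX. \<mu> r = \<nu> r"
  shows "markov_step t A \<mu> = markov_step t A \<nu>"
  using assms unfolding markov_step_def by (intro ext sum.cong) auto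

lemma stationary_unique:
  assumes "full_support_transition t"
    and "stationary t A \<mu>" "stationary t A \<nu>"
    and "(r :: ('a::finite \<times> 'a) set) \<in> LX"
  shows "\<mu> r = \<nu> r"
proof (rule stochastic_stationary_unique[where P = "\<lambda>r. t (Mx r A) r" and S = LX])
  show "finite (LX :: ('a \<times> 'a) set set)" by simp
  show "0 < t (Mx r A) r r'" "(\<Sum>r'\<in>LX. t (Mx r A) r r') = 1" if "r \<in> LX" "r' \<in> LX" for r r'
    using assms(1) that unfolding full_support_transition_def by blast+
  show "\<mu> r' = (\<Sum>r\<in>LX. \<mu> r * t (Mx r A) r r')" "\<nu> r' = (\<Sum>r\<in>LX. \<nu> r * t (Mx r A) r r')"
    if "r' \<in> LX" for r'
    using assms(2,3) that unfolding stationary_def by blast+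
  have "is_dist \<mu>" "is_dist \<nu>" using assms(2,3) unfolding stationary_def by blast+
  then show "(\<Sum>r\<in>LX. \<mu> r) = (\<Sum>r\<in>LX. \<nu> r)" unfolding is_dist_def by argo
qed (rule assms(4))

lemma sum_Nx_Int_Nx_Diff_singleton:
  fixes A :: "'a::finite set"
  assumes "x \<in> A" "A - {x} \<noteq> {}"
  shows "(\<Sum>y\<in>A - {x}. \<Sum>r\<in>Nx x A \<inter> Nx y (A - {x}). \<nu> r * t y r r')
       = (\<Sum>r\<in>Nx x A. \<nu> r * t (Mx r (A - {x})) r r')"
proof -
  have "(\<Sum>y\<in>A - {x}. \<Sum>r\<in>Nx x A \<inter> Nx y (A - {x}). \<nu> r * t y r r')
      = (\<Sum>y\<in>A - {x}. \<Sum>r\<in>Nx x A. if Mx r (A - {x}) = y then \<nu> r * t y r r' else 0)"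
  proof (rule sum.cong[OF refl])
    fix y assume "y \<in> A - {x}"
    then have "Nx x A \<inter> Nx y (A - {x}) = {r \<in> Nx x A. Mx r (A - {x}) = y}"
      using assms by (auto simp: Nx_eq_Mx)
    then show "(\<Sum>r\<in>Nx x A \<inter> Nx y (A - {x}). \<nu> r * t y r r')
        = (\<Sum>r\<in>Nx x A. if Mx r (A - {x}) = y then \<nu> r * t y r r' else 0)"
      by (simp add: sum.inter_filter)
  qed
  also have "\<dots> = (\<Sum>r\<in>Nx x A. \<Sum>y\<in>A - {x}. if Mx r (A - {x}) = y then \<nu> r * t y r r' else 0)"
    by (rule sum.swap)
  also have "\<dots> = (\<Sum>r\<in>Nx x A. \<nu> r * t (Mx r (A - {x})) r r')"
    using assms Mx_in(1)[of _ "A - {x}"] by (intro sum.cong) (auto simp: Nx_def)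
  finally show ?thesis .
qed

lemma markov_step_diff_Diff_singleton:
  fixes A :: "'a::finite set"
  assumes "x \<in> A"
  shows "markov_step t A \<nu> r' - markov_step t (A - {x}) \<nu> r'
       = (\<Sum>r\<in>Nx x A. \<nu> r * t x r r') - (\<Sum>r\<in>Nx x A. \<nu> r * t (Mx r (A - {x})) r r')"
proof -
  have "markov_step t A \<nu> r' - markov_step t (A - {x}) \<nu> r'
      = (\<Sum>r\<in>LX. if Mx r A = x then \<nu> r * t x r r' - \<nu> r * t (Mx r (A - {x})) r r' else 0)"
    unfolding markov_step_def sum_subtractf[symmetric]
    by (intro sum.cong) (auto simp: Mx_Diff_singleton)
  also have "\<dots> = (\<Sum>r\<in>Nx x A. \<nu> r * t x r r' - \<nu> r * t (Mx r (A - {x})) r r')"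
    using assms by (simp add: Nx_eq_Mx sum.inter_filter)
  finally show ?thesis by (simp add: sum_subtractf)
qed

lemma locally_invariant_iff_markov_step_Diff_singleton:
  fixes \<nu> :: "('a::finite \<times> 'a) set \<Rightarrow> real"
  shows "locally_invariant t \<nu> \<longleftrightarrow> (\<forall>A. 3 \<le> card A \<longrightarrow>
     (\<forall>x\<in>A. \<forall>r'\<in>LX. markov_step t (A - {x}) \<nu> r' = markov_step t A \<nu> r'))"
proof -
  have "(\<Sum>r\<in>Nx x A. \<nu> r * t x r r') =
          (\<Sum>y\<in>A - {x}. \<Sum>r\<in>Nx x A \<inter> Nx y (A - {x}). \<nu> r * t y r r')
        \<longleftrightarrow> markov_step t (A - {x}) \<nu> r' = markov_step t A \<nu> r'"
    if "3 \<le> card A" "x \<in> A" for A x r'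
  proof -
    have "A - {x} \<noteq> {}" using that by (auto simp: subset_singleton_iff)
    show ?thesis
      using sum_Nx_Int_Nx_Diff_singleton[OF that(2) \<open>A - {x} \<noteq> {}\<close>, where \<nu> = \<nu> and t = t and r' = r']
        markov_step_diff_Diff_singleton[OF that(2), where \<nu> = \<nu> and t = t and r' = r']
      by linarith
  qed
  then show ?thesis unfolding locally_invariant_def by auto
qed

lemma deletion_invariant_union_eq:
  assumes del: "\<And>A x. 3 \<le> card A \<Longrightarrow> x \<in> A \<Longrightarrow> f (A - {x}) = f A"
    and "2 \<le> card A" "finite D"
  shows "f (A \<union> D) = f A"
  using \<open>finite D\<close>
proof (induction D rule: finite_induct)
  case empty
  show ?case by simp
next
  case (insert d D)
  show ?case
  proof (cases "d \<in> A")
    case True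
    then show ?thesis using insert.IH by (simp add: insert_absorb)
  next
    case False
    have "finite A" using \<open>2 \<le> card A\<close> card_ge_0_finite by force
    then have "card A \<le> card (A \<union> D)" using \<open>finite D\<close> by (intro card_mono) auto
    then have "3 \<le> card (A \<union> insert d D)"
      using \<open>finite A\<close> \<open>finite D\<close> \<open>d \<notin> A\<close> \<open>d \<notin> D\<close> \<open>2 \<le> card A\<close> by simp
    then have "f ((A \<union> insert d D) - {d}) = f (A \<union> insert d D)" by (intro del) auto
    moreover have "(A \<union> insert d D) - {d} = A \<union> D" using \<open>d \<notin> A\<close> \<open>d \<notin> D\<close> by auto
    ultimately show ?thesis using insert.IH by simp
  qed
qed

lemma locally_invariant_iff_markov_step_menu_independent:
  fixes \<nu> :: "('a::finite \<times> 'a) set \<Rightarrow> real"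
  shows "locally_invariant t \<nu> \<longleftrightarrow> (\<forall>A B. 2 \<le> card A \<longrightarrow> 2 \<le> card B \<longrightarrow>
     (\<forall>r'\<in>LX. markov_step t A \<nu> r' = markov_step t B \<nu> r'))"
proof
  assume "locally_invariant t \<nu>"
  define f where "f A r' = (if r' \<in> LX then markov_step t A \<nu> r' else 0)" for A r'
  have del: "f (A - {x}) = f A" if "3 \<le> card A" "x \<in> A" for A x
    using \<open>locally_invariant t \<nu>\<close> that
    unfolding f_def locally_invariant_iff_markov_step_Diff_singleton
    by (intro ext) simp
  have f_eq: "f A = f B" if "2 \<le> card A" "2 \<le> card B" for A B
  proof -
    have "f (A \<union> B) = f A" "f (B \<union> A) = f B"
      using deletion_invariant_union_eq[of f, OF del] that by simp_all
    then show ?thesis by (simp add: Un_commute)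
  qed
  show "\<forall>A B. 2 \<le> card A \<longrightarrow> 2 \<le> card B \<longrightarrow>
      (\<forall>r'\<in>LX. markov_step t A \<nu> r' = markov_step t B \<nu> r')"
  proof (intro allI impI ballI)
    fix A B :: "'a set" and r' :: "('a \<times> 'a) set" assume "2 \<le> card A" "2 \<le> card B" "r' \<in> LX"
    then have "f A r' = f B r'" using f_eq[of A B] by simp
    with \<open>r' \<in> LX\<close> show "markov_step t A \<nu> r' = markov_step t B \<nu> r'"
      by (simp add: f_def)
  qed
next
  assume menu_independent: "\<forall>A B. 2 \<le> card A \<longrightarrow> 2 \<le> card B \<longrightarrow>
      (\<forall>r'\<in>LX. markov_step t A \<nu> r' = markov_step t B \<nu> r')"
  show "locally_invariant t \<nu>"
    unfolding locally_invariant_iff_markov_step_Diff_singleton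
  proof (intro allI impI ballI)
    fix A :: "'a set" and x and r' :: "('a \<times> 'a) set" assume "3 \<le> card A" "x \<in> A" "r' \<in> LX"
    moreover from this have "2 \<le> card (A - {x})" by (simp add: card_Diff_singleton)
    ultimately show "markov_step t (A - {x}) \<nu> r' = markov_step t A \<nu> r'"
      using menu_independent by simp
  qed
qed

lemma menu_invariant_imp_locally_invariant:
  fixes \<nu> :: "'a::finite set \<Rightarrow> ('a \<times> 'a) set \<Rightarrow> real"
  assumes "\<forall>A\<in>X2. stationary t A (\<nu> A)" "menu_invariant \<nu>" "B \<in> X2"
  shows "locally_invariant t (\<nu> B)"
proof -
  have "markov_step t A (\<nu> B) r' = \<nu> B r'" if "A \<in> X2" "r' \<in> LX" for A r'
  proof -
    have same: "\<forall>r\<in>LX. \<nu> B r = \<nu> A r"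
      using assms(2,3) \<open>A \<in> X2\<close> unfolding menu_invariant_def by blast
    then have "markov_step t A (\<nu> B) r' = markov_step t A (\<nu> A) r'"
      by (simp only: markov_step_cong)
    also have "\<dots> = \<nu> A r'"
      using assms(1) that by (simp add: stationary_iff_markov_step)
    also have "\<dots> = \<nu> B r'" using same \<open>r' \<in> LX\<close> by simp
    finally show ?thesis .
  qed
  then show ?thesis by (simp add: locally_invariant_iff_markov_step_menu_independent X2_def)
qed

lemma locally_invariant_imp_menu_invariant:
  fixes \<nu> :: "'a::finite set \<Rightarrow> ('a \<times> 'a) set \<Rightarrow> real"
  assumes "full_support_transition t" "\<forall>A\<in>X2. stationary t A (\<nu> A)"
    and "B \<in> X2" "locally_invariant t (\<nu> B)"
  shows "menu_invariant \<nu>"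
proof -
  have "stationary t A (\<nu> B)" if "A \<in> X2" for A
  proof -
    have "markov_step t A (\<nu> B) r' = \<nu> B r'" if "r' \<in> LX" for r'
    proof -
      have "markov_step t A (\<nu> B) r' = markov_step t B (\<nu> B) r'"
        using assms(3,4) \<open>A \<in> X2\<close> \<open>r' \<in> LX\<close>
        unfolding locally_invariant_iff_markov_step_menu_independent X2_def by blast
      also have "\<dots> = \<nu> B r'"
        using assms(2,3) \<open>r' \<in> LX\<close> by (simp add: stationary_iff_markov_step)
      finally show ?thesis .
    qed
    moreover have "is_dist (\<nu> B)" using assms(2,3) unfolding stationary_def by blast
    ultimately show ?thesis by (simp add: stationary_iff_markov_step)
  qed
  then have "\<nu> A r = \<nu> B r" if "A \<in> X2" "r \<in> LX" for A r
    using stationary_unique[OF assms(1) _ _ \<open>r \<in> LX\<close>] assms(2) \<open>A \<in> X2\<close> by blast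
  then show ?thesis unfolding menu_invariant_def by simp
qed

theorem theorem1:
  fixes t :: "'a::finite \<Rightarrow> ('a \<times> 'a) set \<Rightarrow> ('a \<times> 'a) set \<Rightarrow> real"
    and \<nu> :: "'a set \<Rightarrow> ('a \<times> 'a) set \<Rightarrow> real"
  assumes "2 \<le> card (UNIV :: 'a set)"
    and "full_support_transition t"
    and "\<forall>A\<in>X2. stationary t A (\<nu> A)"
  shows "(menu_invariant \<nu> \<longleftrightarrow> (\<forall>A\<in>X2. locally_invariant t (\<nu> A)))
       \<and> ((\<forall>A\<in>X2. locally_invariant t (\<nu> A)) \<longleftrightarrow> (\<exists>A\<in>X2. locally_invariant t (\<nu> A)))"
proof -
  have "(UNIV :: 'a set) \<in> X2" using assms(1) by (simp add: X2_def)
  then show ?thesis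
    using menu_invariant_imp_locally_invariant[OF assms(3)]
      locally_invariant_imp_menu_invariant[OF assms(2,3)] by blast
qed

end
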